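(* Let $\rho\in\mathbb P^N$ and let $i,j\in N$ with $i\neq j$. (a) Let $\rho^{-ij}=\rho_{g_N-ij}$. Then for every network $g\in\mathbb G^N$: $\rho^{-ij}(g)=\rho(g)+\rho(g+ij)$ if $ij\notin g$, and $\rho^{-ij}(g)=0$ if $ij\in g$. Furthermore $g(\rho^{-ij})=g(\rho)-ij$ and $\mathbb G(\rho^{-ij})=\{g\in\mathbb G^N: ij\notin g \text{ and } \mathbb G(\rho)\cap\{g,g+ij\}\neq\varnothing\}$. (b) Let $\rho^{-i}=\rho_{g_{N-i}}$ where $g_{N-i}=g_N\setminus L_i(g_N)$. Then for every network $g\subseteq g_{N-i}$, $\rho^{-i}(g)=\rho(g)+\sum_{\varnothing\neq h\subseteq L_i(g(\rho))}\rho(g\cup h)$, and for every $g\not\subseteq g_{N-i}$, $\rho^{-i}(g)=0$. Furthermore $g(\rho^{-i})=g(\rho)\setminus L_i(g_N)$ and $\mathbb G(\rho^{-i})=\{g\in\mathbb G^N: g\cap L_i(g_N)=\varnothing \text{ and } \mathbb G(\rho)\cap\{g\cup h: h\subseteq L_i(g_N)\}\neq\varnothing\}$.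
   Context: $N=\{1,\dots,n\}$ is a finite player set. A link is an unordered pair $ij=\{i,j\}$ of distinct players; $g_N$ is the set of all links; a network is any $g\subseteq g_N$; $\mathbb G^N$ is the set of all networks. For a network $g$, $L_i(g)=\{ij\in g\}$ is the set of links of player $i$ in $g$; $g+ij=g\cup\{ij\}$ and $g-ij=g\setminus\{ij\}$. A network formation probability distribution is a map $\rho\colon\mathbb G^N\to[0,1]$ with $\sum_{g\in\mathbb G^N}\rho(g)=1$; $\mathbb P^N$ is the set of these. $\mathbb G(\rho)=\{g:\rho(g)>0\}$ is the set of formable networks and the extent is $g(\rho)=\bigcup_{g\in\mathbb G(\rho)}g$. For a network $g$, the restriction of $\rho$ to $g$ is $\rho_g\in\mathbb P^N$ with $\rho_g(h)=\sum_{h'\subseteq g_N\setminus g}\rho(h\cup h')$ if $h\subseteq g$ and $\rho_g(h)=0$ otherwise. *)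

theory Defs
  imports Complex_Main
begin

type_synonym link = "nat set"
type_synonym network = "link set"

definition players :: "nat \<Rightarrow> nat set" where
  "players n = {1..n}"

definition link :: "nat \<Rightarrow> nat \<Rightarrow> link" where
  "link i j = {i, j}"

definition complete_net :: "nat \<Rightarrow> network" where
  "complete_net n = {link i j | i j. i \<in> players n \<and> j \<in> players n \<and> i \<noteq> j}"

definition networks :: "nat \<Rightarrow> network set" where
  "networks n = Pow (complete_net n)"

definition links_of :: "nat \<Rightarrow> network \<Rightarrow> network" where
  "links_of i g = {l \<in> g. i \<in> l}"

definition prob_dists :: "nat \<Rightarrow> (network \<Rightarrow> real) set" where
  "prob_dists n = {\<rho>. (\<forall>g. 0 \<le> \<rho> g \<and> \<rho> g \<le> 1) \<and> (\<forall>g. g \<notin> networks n \<longrightarrow> \<rho> g = 0)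
                        \<and> (\<Sum>g\<in>networks n. \<rho> g) = 1}"

definition formable :: "nat \<Rightarrow> (network \<Rightarrow> real) \<Rightarrow> network set" where
  "formable n \<rho> = {g \<in> networks n. \<rho> g > 0}"

definition extent :: "nat \<Rightarrow> (network \<Rightarrow> real) \<Rightarrow> network" where
  "extent n \<rho> = \<Union> (formable n \<rho>)"

definition restrict_dist :: "nat \<Rightarrow> (network \<Rightarrow> real) \<Rightarrow> network \<Rightarrow> (network \<Rightarrow> real)" where
  "restrict_dist n \<rho> g = (\<lambda>h. if h \<subseteq> g then (\<Sum>h'\<in>Pow (complete_net n - g). \<rho> (h \<union> h')) else 0)"

end

theory Submission
  imports Defs
begin

(* Both parts restrict \<rho> to the complement C - S of a set S of links of the complete
   network C, with S = {ij} in (a) and S = L_i(C) in (b). For g \<subseteq> C - S the restricted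
   probability is the sum of \<rho>(g \<union> h) over h \<subseteq> S. All terms are nonnegative, so it is
   positive iff some g \<union> h is formable, which describes the formable networks and the
   extent of the restriction; and only h \<subseteq> S \<inter> g(\<rho>) can contribute, since every
   formable network lies inside the extent. *)

lemma finite_complete_net: "finite (complete_net n)"
proof -
  have "complete_net n \<subseteq> (\<lambda>(i, j). link i j) ` (players n \<times> players n)"
    unfolding complete_net_def by auto
  then show ?thesis
    by (rule finite_subset) (simp add: players_def)
qed

lemma link_in_complete_net:
  "i \<in> players n \<Longrightarrow> j \<in> players n \<Longrightarrow> i \<noteq> j \<Longrightarrow> link i j \<in> complete_net n"
  unfolding complete_net_def by blast

lemma links_of_subset: "links_of i g \<subseteq> g"
  unfolding links_of_def by blast

lemma prob_dists_nonneg: "\<rho> \<in> prob_dists n \<Longrightarrow> 0 \<le> \<rho> g"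
  unfolding prob_dists_def by blast

lemma formable_iff_pos: "\<rho> \<in> prob_dists n \<Longrightarrow> g \<in> formable n \<rho> \<longleftrightarrow> 0 < \<rho> g"
  unfolding formable_def prob_dists_def by force

lemma formable_subset_extent: "g \<in> formable n \<rho> \<Longrightarrow> g \<subseteq> extent n \<rho>"
  unfolding extent_def by blast

lemma extent_subset_complete_net: "extent n \<rho> \<subseteq> complete_net n"
  unfolding extent_def formable_def networks_def by blast

lemma restrict_dist_eq_0: "\<not> h \<subseteq> g \<Longrightarrow> restrict_dist n \<rho> g h = 0"
  unfolding restrict_dist_def by simp

lemma restrict_dist_complement:
  assumes "S \<subseteq> complete_net n" and "h \<subseteq> complete_net n - S"
  shows "restrict_dist n \<rho> (complete_net n - S) h = (\<Sum>h'\<in>Pow S. \<rho> (h \<union> h'))"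
  using assms by (simp add: restrict_dist_def double_diff)

lemma sum_Pow_eq_sum_Pow_extent:
  assumes "\<rho> \<in> prob_dists n" and "finite S"
  shows "(\<Sum>h\<in>Pow S. \<rho> (g \<union> h)) = (\<Sum>h\<in>Pow (S \<inter> extent n \<rho>). \<rho> (g \<union> h))"
proof (rule sum.mono_neutral_right)
  show "\<forall>h \<in> Pow S - Pow (S \<inter> extent n \<rho>). \<rho> (g \<union> h) = 0"
  proof
    fix h assume "h \<in> Pow S - Pow (S \<inter> extent n \<rho>)"
    then have "g \<union> h \<notin> formable n \<rho>"
      using formable_subset_extent by blast
    then show "\<rho> (g \<union> h) = 0"
      using assms(1) formable_iff_pos prob_dists_nonneg by (metis order_le_less)
  qed
qed (use assms(2) in auto)

lemma sum_Pow_split_empty: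
  assumes "finite A"
  shows "(\<Sum>h\<in>Pow A. f h) = f {} + (\<Sum>h\<in>{h. h \<subseteq> A \<and> h \<noteq> {}}. f h)"
proof -
  have "Pow A = insert {} {h. h \<subseteq> A \<and> h \<noteq> {}}" by blast
  moreover have "finite {h. h \<subseteq> A \<and> h \<noteq> {}}"
    using assms by simp
  ultimately show ?thesis by simp
qed

lemma restrict_dist_complement_pos_iff:
  assumes "\<rho> \<in> prob_dists n" and "S \<subseteq> complete_net n" and "h \<subseteq> complete_net n - S"
  shows "0 < restrict_dist n \<rho> (complete_net n - S) h \<longleftrightarrow> (\<exists>h'\<subseteq>S. h \<union> h' \<in> formable n \<rho>)"
proof -
  have "finite (Pow S)"
    using assms(2) finite_complete_net finite_subset by blast
  moreover have nonneg: "\<And>h'. 0 \<le> \<rho> (h \<union> h')"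
    using assms(1) by (rule prob_dists_nonneg)
  ultimately have "(\<Sum>h'\<in>Pow S. \<rho> (h \<union> h')) = 0 \<longleftrightarrow> (\<forall>h'\<in>Pow S. \<rho> (h \<union> h') = 0)"
    by (rule sum_nonneg_eq_0_iff)
  then have "0 < (\<Sum>h'\<in>Pow S. \<rho> (h \<union> h')) \<longleftrightarrow> (\<exists>h'\<in>Pow S. 0 < \<rho> (h \<union> h'))"
    using nonneg sum_nonneg[of "Pow S" "\<lambda>h'. \<rho> (h \<union> h')"] by (auto simp: less_le)
  then show ?thesis
    using restrict_dist_complement[OF assms(2,3)] formable_iff_pos[OF assms(1)] by auto
qed

lemma formable_restrict_dist_complement:
  assumes "\<rho> \<in> prob_dists n" and "S \<subseteq> complete_net n"
  shows "formable n (restrict_dist n \<rho> (complete_net n - S))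
    = {g \<in> networks n. g \<inter> S = {} \<and> formable n \<rho> \<inter> {g \<union> h | h. h \<subseteq> S} \<noteq> {}}"
proof (rule set_eqI)
  fix g
  show "g \<in> formable n (restrict_dist n \<rho> (complete_net n - S))
    \<longleftrightarrow> g \<in> {g \<in> networks n. g \<inter> S = {} \<and> formable n \<rho> \<inter> {g \<union> h | h. h \<subseteq> S} \<noteq> {}}"
  proof (cases "g \<subseteq> complete_net n - S")
    case True
    then show ?thesis
      using restrict_dist_complement_pos_iff[OF assms True]
      by (auto simp: formable_def)
  next
    case False
    then show ?thesis
      by (auto simp: formable_def networks_def restrict_dist_eq_0)
  qed
qed

lemma extent_restrict_dist_complement:
  assumes "\<rho> \<in> prob_dists n" and "S \<subseteq> complete_net n"
  shows "extent n (restrict_dist n \<rho> (complete_net n - S)) = extent n \<rho> - S"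
proof
  show "extent n (restrict_dist n \<rho> (complete_net n - S)) \<subseteq> extent n \<rho> - S"
    unfolding extent_def[of n "restrict_dist n \<rho> _"] formable_restrict_dist_complement[OF assms]
    using formable_subset_extent by blast
next
  show "extent n \<rho> - S \<subseteq> extent n (restrict_dist n \<rho> (complete_net n - S))"
  proof
    fix x assume "x \<in> extent n \<rho> - S"
    then obtain g where g: "g \<in> formable n \<rho>" "x \<in> g" "x \<notin> S"
      unfolding extent_def by blast
    have "g = (g - S) \<union> (g \<inter> S)" by blast
    moreover have "g - S \<in> networks n"
      using g(1) unfolding formable_def networks_def by blast
    ultimately have "g - S \<in> formable n (restrict_dist n \<rho> (complete_net n - S))"
      unfolding formable_restrict_dist_complement[OF assms] using g(1) by blast
    then show "x \<in> extent n (restrict_dist n \<rho> (complete_net n - S))"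
      unfolding extent_def using g by blast
  qed
qed

lemma restrict_dist_remove_link:
  assumes "l \<in> complete_net n" and "g \<in> networks n"
  shows "restrict_dist n \<rho> (complete_net n - {l}) g
    = (if l \<notin> g then \<rho> g + \<rho> (insert l g) else 0)"
proof (cases "l \<in> g")
  case False
  with assms have "g \<subseteq> complete_net n - {l}"
    unfolding networks_def by blast
  moreover have "Pow {l} = {{}, {l}}" by blast
  ultimately show ?thesis
    using False assms(1) by (simp add: restrict_dist_complement)
qed (auto intro: restrict_dist_eq_0)

lemma formable_restrict_dist_remove_link:
  assumes "\<rho> \<in> prob_dists n" and "l \<in> complete_net n"
  shows "formable n (restrict_dist n \<rho> (complete_net n - {l}))
    = {g \<in> networks n. l \<notin> g \<and> formable n \<rho> \<inter> {g, insert l g} \<noteq> {}}"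
proof -
  have "\<And>g. {g \<union> h | h. h \<subseteq> {l}} = {g, insert l g}" by blast
  then show ?thesis
    using formable_restrict_dist_complement[OF assms(1), of "{l}"] assms(2) by auto
qed

lemma restrict_dist_remove_player:
  assumes "\<rho> \<in> prob_dists n" and "g \<subseteq> complete_net n - links_of i (complete_net n)"
  shows "restrict_dist n \<rho> (complete_net n - links_of i (complete_net n)) g
    = \<rho> g + (\<Sum>h\<in>{h. h \<subseteq> links_of i (extent n \<rho>) \<and> h \<noteq> {}}. \<rho> (g \<union> h))"
proof -
  let ?L = "links_of i (complete_net n)"
  have "finite ?L"
    using finite_complete_net links_of_subset by (rule finite_subset[rotated])
  have L_extent: "?L \<inter> extent n \<rho> = links_of i (extent n \<rho>)"
    unfolding links_of_def using extent_subset_complete_net by blast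
  have "finite (links_of i (extent n \<rho>))"
    using \<open>finite ?L\<close> by (simp flip: L_extent)
  have "restrict_dist n \<rho> (complete_net n - ?L) g = (\<Sum>h\<in>Pow ?L. \<rho> (g \<union> h))"
    using links_of_subset assms(2) by (rule restrict_dist_complement)
  also have "\<dots> = (\<Sum>h\<in>Pow (links_of i (extent n \<rho>)). \<rho> (g \<union> h))"
    unfolding L_extent[symmetric] using assms(1) \<open>finite ?L\<close> by (rule sum_Pow_eq_sum_Pow_extent)
  also have "\<dots> = \<rho> g + (\<Sum>h\<in>{h. h \<subseteq> links_of i (extent n \<rho>) \<and> h \<noteq> {}}. \<rho> (g \<union> h))"
    using sum_Pow_split_empty[OF \<open>finite (links_of i (extent n \<rho>))\<close>, of "\<lambda>h. \<rho> (g \<union> h)"]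
    by simp
  finally show ?thesis .
qed

theorem proposition1:
  fixes n :: nat and \<rho> :: "network \<Rightarrow> real" and i j :: nat
  assumes "\<rho> \<in> prob_dists n"
    and "i \<in> players n" and "j \<in> players n" and "i \<noteq> j"
  shows
   "(let \<rho>ij = restrict_dist n \<rho> (complete_net n - {link i j}) in
      (\<forall>g \<in> networks n.
         \<rho>ij g = (if link i j \<notin> g then \<rho> g + \<rho> (insert (link i j) g) else 0))
    \<and> extent n \<rho>ij = extent n \<rho> - {link i j}
    \<and> formable n \<rho>ij = {g \<in> networks n. link i j \<notin> g
                            \<and> formable n \<rho> \<inter> {g, insert (link i j) g} \<noteq> {}})
  \<and> (let gNi = complete_net n - links_of i (complete_net n);
        \<rho>i = restrict_dist n \<rho> gNi in
      (\<forall>g. g \<subseteq> gNi \<longrightarrow>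
         \<rho>i g = \<rho> g + (\<Sum>h\<in>{h. h \<subseteq> links_of i (extent n \<rho>) \<and> h \<noteq> {}}. \<rho> (g \<union> h)))
    \<and> (\<forall>g \<in> networks n. \<not> g \<subseteq> gNi \<longrightarrow> \<rho>i g = 0)
    \<and> extent n \<rho>i = extent n \<rho> - links_of i (complete_net n)
    \<and> formable n \<rho>i = {g \<in> networks n. g \<inter> links_of i (complete_net n) = {}
                     \<and> formable n \<rho> \<inter> {g \<union> h | h. h \<subseteq> links_of i (complete_net n)} \<noteq> {}})"
proof -
  have l: "link i j \<in> complete_net n"
    using assms(2-4) by (rule link_in_complete_net)
  have L: "links_of i (complete_net n) \<subseteq> complete_net n"
    by (rule links_of_subset)
  show ?thesis
    unfolding Let_def
    using restrict_dist_remove_link[OF l] restrict_dist_remove_player[OF assms(1)]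
      restrict_dist_eq_0[of _ "complete_net n - links_of i (complete_net n)"]
      extent_restrict_dist_complement[OF assms(1)] l L
      formable_restrict_dist_remove_link[OF assms(1) l]
      formable_restrict_dist_complement[OF assms(1) L]
    by auto
qed

end
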